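(* Let $H$ be a Hilbert space, let $A_1,\dots,A_n$ and $B_1,\dots,B_n$ be strictly positive bounded operators on $H$ with $\sum_{j=1}^n A_j=\sum_{j=1}^n B_j=I$, and let $\mu\in\mathbb{R}$, $\lambda>0$. Then, in the operator order, $$\sum_{j=1}^n S_{\mu-2\lambda}(A_j|B_j)\le \sum_{j=1}^n\tilde T_{\mu,2,-\lambda}(A_j|B_j)\le \sum_{j=1}^n S_{\mu-\lambda}(A_j|B_j)\le \sum_{j=1}^n\tilde T_{\mu,1,-\lambda}(A_j|B_j)\le \sum_{j=1}^n S_\mu(A_j|B_j)$$ $$\le \sum_{j=1}^n\tilde T_{\mu,1,\lambda}(A_j|B_j)\le \sum_{j=1}^n S_{\mu+\lambda}(A_j|B_j)\le \sum_{j=1}^n\tilde T_{\mu,2,\lambda}(A_j|B_j)\le \sum_{j=1}^n S_{\mu+2\lambda}(A_j|B_j).$$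
   Context: A bounded operator $T$ on $H$ is strictly positive ($T>0$) if $(Tx,x)\ge0$ for all $x$ and $T$ is invertible; $X\le Y$ means $((Y-X)x,x)\ge 0$ for all $x$. $I$ is the identity. Powers and $\log$ of strictly positive operators are defined by functional calculus. For $A>0$, $B>0$ and $\nu\in\mathbb{R}$: $A\natural_\nu B=A^{1/2}(A^{-1/2}BA^{-1/2})^{\nu}A^{1/2}$, and the generalized relative operator entropy is $S_\nu(A|B)=A^{1/2}(A^{-1/2}BA^{-1/2})^{\nu}(\log A^{-1/2}BA^{-1/2})A^{1/2}$. For $\lambda,\mu\in\mathbb{R}$, $\lambda\ne 0$, $k\in\mathbb{Z}$, the generalized Tsallis relative operator entropy is $\tilde T_{\mu,k,\lambda}(A|B)=\dfrac{A\natural_{\mu+k\lambda}B-A\natural_{\mu+(k-1)\lambda}B}{\lambda}$. *)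

theory Defs
  imports "HOL-Analysis.Analysis" "HOL-Computational_Algebra.Polynomial"
begin

text \<open>Bounded operators on a (real) Hilbert space 'a of class real_inner and complete_space are represented by the library type blinfun.\<close>

definition op_le :: "('a::real_inner \<Rightarrow>\<^sub>L 'a) \<Rightarrow> ('a \<Rightarrow>\<^sub>L 'a) \<Rightarrow> bool" where
  "op_le X Y \<longleftrightarrow> (\<forall>x. inner ((Y - X) x) x \<ge> 0)"

definition self_adjoint :: "('a::real_inner \<Rightarrow>\<^sub>L 'a) \<Rightarrow> bool" where
  "self_adjoint T \<longleftrightarrow> (\<forall>x y. inner (T x) y = inner x (T y))"

definition op_invertible :: "('a::real_normed_vector \<Rightarrow>\<^sub>L 'a) \<Rightarrow> bool" where
  "op_invertible T \<longleftrightarrow> (\<exists>S. S o\<^sub>L T = id_blinfun \<and> T o\<^sub>L S = id_blinfun)"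

definition strictly_pos :: "('a::real_inner \<Rightarrow>\<^sub>L 'a) \<Rightarrow> bool" where
  "strictly_pos T \<longleftrightarrow> self_adjoint T \<and> (\<forall>x. inner (T x) x \<ge> 0) \<and> op_invertible T"

fun op_pow :: "('a::real_normed_vector \<Rightarrow>\<^sub>L 'a) \<Rightarrow> nat \<Rightarrow> ('a \<Rightarrow>\<^sub>L 'a)" where
  "op_pow T 0 = id_blinfun"
| "op_pow T (Suc k) = T o\<^sub>L op_pow T k"

definition poly_op :: "real poly \<Rightarrow> ('a::real_normed_vector \<Rightarrow>\<^sub>L 'a) \<Rightarrow> ('a \<Rightarrow>\<^sub>L 'a)" where
  "poly_op p T = (\<Sum>i\<le>degree p. coeff p i *\<^sub>R op_pow T i)"

text \<open>Bounds of the numerical range; the spectrum of a self-adjoint operator lies in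
  [num_lo T, num_hi T].\<close>
definition num_lo :: "('a::real_inner \<Rightarrow>\<^sub>L 'a) \<Rightarrow> real" where
  "num_lo T = Inf {inner (T x) x | x. norm x = 1}"

definition num_hi :: "('a::real_inner \<Rightarrow>\<^sub>L 'a) \<Rightarrow> real" where
  "num_hi T = Sup {inner (T x) x | x. norm x = 1}"

text \<open>Continuous functional calculus of a self-adjoint operator: f(T) is the limit of
  p(T) for polynomials p converging uniformly to f on an interval containing the spectrum.\<close>
definition fcalc :: "(real \<Rightarrow> real) \<Rightarrow> ('a::real_inner \<Rightarrow>\<^sub>L 'a) \<Rightarrow> ('a \<Rightarrow>\<^sub>L 'a)" where
  "fcalc f T = (THE X. \<forall>e>0. \<exists>d>0. \<forall>p.
      (\<forall>t\<in>{num_lo T..num_hi T}. \<bar>poly p t - f t\<bar> < d) \<longrightarrow> norm (poly_op p T - X) < e)"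

definition op_rpow :: "('a::real_inner \<Rightarrow>\<^sub>L 'a) \<Rightarrow> real \<Rightarrow> ('a \<Rightarrow>\<^sub>L 'a)" where
  "op_rpow T \<nu> = fcalc (\<lambda>t. t powr \<nu>) T"

definition op_log :: "('a::real_inner \<Rightarrow>\<^sub>L 'a) \<Rightarrow> ('a \<Rightarrow>\<^sub>L 'a)" where
  "op_log T = fcalc ln T"

definition wgmean :: "real \<Rightarrow> ('a::real_inner \<Rightarrow>\<^sub>L 'a) \<Rightarrow> ('a \<Rightarrow>\<^sub>L 'a) \<Rightarrow> ('a \<Rightarrow>\<^sub>L 'a)" where
  "wgmean \<nu> A B =
     op_rpow A (1/2) o\<^sub>L
     op_rpow (op_rpow A (-1/2) o\<^sub>L B o\<^sub>L op_rpow A (-1/2)) \<nu> o\<^sub>L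
     op_rpow A (1/2)"

definition rel_entropy :: "real \<Rightarrow> ('a::real_inner \<Rightarrow>\<^sub>L 'a) \<Rightarrow> ('a \<Rightarrow>\<^sub>L 'a) \<Rightarrow> ('a \<Rightarrow>\<^sub>L 'a)" where
  "rel_entropy \<nu> A B =
     (let C = op_rpow A (-1/2) o\<^sub>L B o\<^sub>L op_rpow A (-1/2) in
      op_rpow A (1/2) o\<^sub>L op_rpow C \<nu> o\<^sub>L op_log C o\<^sub>L op_rpow A (1/2))"

definition gtsallis :: "real \<Rightarrow> int \<Rightarrow> real \<Rightarrow> ('a::real_inner \<Rightarrow>\<^sub>L 'a) \<Rightarrow> ('a \<Rightarrow>\<^sub>L 'a) \<Rightarrow> ('a \<Rightarrow>\<^sub>L 'a)" where
  "gtsallis \<mu> k l A B =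
     (1/l) *\<^sub>R (wgmean (\<mu> + of_int k * l) A B - wgmean (\<mu> + (of_int k - 1) * l) A B)"

end

theory Submission
  imports Defs
begin

text \<open>Both \<open>rel_entropy \<nu> A B\<close> and \<open>gtsallis \<mu> k \<lambda> A B\<close> are operator perspectives
  \<open>A^(1/2) f(A^(-1/2) B A^(-1/2)) A^(1/2)\<close>: for the former \<open>f t = t^\<nu> ln t\<close>, for the latter \<open>f\<close> is
  the divided difference of \<open>s \<mapsto> t^s\<close> between the exponents \<open>\<mu> + (k - 1)\<lambda>\<close> and \<open>\<mu> + k\<lambda>\<close>.
  As \<open>s \<mapsto> t^s\<close> is convex with derivative \<open>t^s ln t\<close>, that divided difference lies between the
  values of \<open>t^s ln t\<close> at the two exponents, and perspectives are monotone in \<open>f\<close>; so the chain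
  holds term by term, hence for the sums.

  A polynomial
  nonnegative on \<open>[m, M]\<close> lies in the preordering generated by \<open>t - m\<close> and \<open>M - t\<close>; when \<open>[m, M]\<close>
  is the hull of the numerical range of \<open>T\<close>, this makes \<open>p(T)\<close> positive and bounds the norm of
  \<open>p(T)\<close> by the maximum of \<open>|p|\<close> on \<open>[m, M]\<close>. Weierstrass approximation then extends the
  calculus to continuous functions, keeping linearity, multiplicativity and positivity.\<close>

lemma blinfun_compose_id_right [simp]: "T o\<^sub>L id_blinfun = T"
  by (rule blinfun_eqI) simp

lemma blinfun_compose_assoc: "(X o\<^sub>L Y) o\<^sub>L Z = X o\<^sub>L (Y o\<^sub>L Z)"
  by (rule blinfun_eqI) simp

section \<open>Polynomials of an operator\<close>

lemma poly_op_eq_sum: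
  assumes "degree p \<le> N"
  shows "poly_op p T = (\<Sum>i\<le>N. coeff p i *\<^sub>R op_pow T i)"
  unfolding poly_op_def
  by (rule sum.mono_neutral_left) (use assms in \<open>auto simp: coeff_eq_0\<close>)

lemma poly_op_pCons: "poly_op (pCons a p) T = a *\<^sub>R id_blinfun + (T o\<^sub>L poly_op p T)"
proof -
  have "poly_op (pCons a p) T = (\<Sum>i\<le>Suc (degree p). coeff (pCons a p) i *\<^sub>R op_pow T i)"
    by (rule poly_op_eq_sum) (simp add: degree_pCons_le)
  also have "\<dots> = a *\<^sub>R id_blinfun + (\<Sum>i\<le>degree p. coeff p i *\<^sub>R (T o\<^sub>L op_pow T i))"
    by (subst sum.atMost_Suc_shift) simp
  also have "(\<Sum>i\<le>degree p. coeff p i *\<^sub>R (T o\<^sub>L op_pow T i)) = T o\<^sub>L poly_op p T"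
    unfolding poly_op_def
    by (simp add: bounded_bilinear.sum_right[OF bounded_bilinear_blinfun_compose]
        bounded_bilinear.scaleR_right[OF bounded_bilinear_blinfun_compose])
  finally show ?thesis .
qed

lemma poly_op_0 [simp]: "poly_op 0 T = 0"
  by (simp add: poly_op_def)

lemma poly_op_const [simp]: "poly_op [:c:] T = c *\<^sub>R id_blinfun"
  using poly_op_pCons[of c 0 T] by simp

lemma poly_op_add: "poly_op (p + q) T = poly_op p T + poly_op q T"
proof (induction p arbitrary: q)
  case (pCons a p)
  then show ?case
    by (cases q) (simp add: poly_op_pCons scaleR_add_left
        bounded_bilinear.add_right[OF bounded_bilinear_blinfun_compose])
qed simp

lemma poly_op_smult: "poly_op (smult c p) T = c *\<^sub>R poly_op p T"
  by (induction p) (simp_all add: poly_op_pCons scaleR_add_right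
      bounded_bilinear.scaleR_right[OF bounded_bilinear_blinfun_compose])

lemma poly_op_diff: "poly_op (p - q) T = poly_op p T - poly_op q T"
  using poly_op_add[of p "- q" T] poly_op_smult[of "-1" q T] by simp

lemma poly_op_mult: "poly_op (p * q) T = poly_op p T o\<^sub>L poly_op q T"
proof (induction p)
  case (pCons a p)
  have "poly_op (pCons a p * q) T = a *\<^sub>R poly_op q T + (T o\<^sub>L poly_op (p * q) T)"
    by (simp add: poly_op_add poly_op_smult poly_op_pCons)
  also have "\<dots> = poly_op (pCons a p) T o\<^sub>L poly_op q T"
    by (rule blinfun_eqI) (simp add: poly_op_pCons pCons.IH blinfun.add_left blinfun.scaleR_left)
  finally show ?case .
qed (simp add: bounded_bilinear.zero_left[OF bounded_bilinear_blinfun_compose])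

lemma poly_op_monom_1: "poly_op [:0, 1:] T = T"
  by (simp add: poly_op_pCons)

lemma poly_op_commute: "T o\<^sub>L poly_op p T = poly_op p T o\<^sub>L T"
  using poly_op_mult[of "[:0, 1:]" p T] poly_op_mult[of p "[:0, 1:]" T]
  by (simp add: poly_op_monom_1 mult.commute)

lemma poly_op_scaleR_id: "poly_op p (c *\<^sub>R id_blinfun) = poly p c *\<^sub>R id_blinfun"
  by (induction p) (simp_all add: poly_op_pCons blinfun_eqI blinfun.scaleR_left algebra_simps)

section \<open>Positive operators\<close>

definition op_pos :: "('a::real_inner \<Rightarrow>\<^sub>L 'a) \<Rightarrow> bool" where
  "op_pos X \<longleftrightarrow> (\<forall>x. 0 \<le> inner (X x) x)"

lemma op_le_iff_op_pos: "op_le X Y \<longleftrightarrow> op_pos (Y - X)"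
  by (simp add: op_le_def op_pos_def)

lemma op_pos_add: "op_pos S \<Longrightarrow> op_pos T \<Longrightarrow> op_pos (S + T)"
  by (simp add: op_pos_def blinfun.add_left inner_add_left)

lemma self_adjoint_add: "self_adjoint S \<Longrightarrow> self_adjoint T \<Longrightarrow> self_adjoint (S + T)"
  by (simp add: self_adjoint_def blinfun.add_left inner_add_left inner_add_right)

lemma self_adjoint_diff: "self_adjoint S \<Longrightarrow> self_adjoint T \<Longrightarrow> self_adjoint (S - T)"
  by (simp add: self_adjoint_def blinfun.diff_left inner_diff_left inner_diff_right)

lemma self_adjoint_scaleR: "self_adjoint S \<Longrightarrow> self_adjoint (c *\<^sub>R S)"
  by (simp add: self_adjoint_def blinfun.scaleR_left)

lemma self_adjoint_id: "self_adjoint id_blinfun"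
  by (simp add: self_adjoint_def)

lemma self_adjoint_compose_commuting:
  assumes "self_adjoint S" "self_adjoint T" "S o\<^sub>L T = T o\<^sub>L S"
  shows "self_adjoint (S o\<^sub>L T)"
  unfolding self_adjoint_def
proof (intro allI)
  fix x y
  have "inner (S (T x)) y = inner x (T (S y))"
    using assms(1,2) by (simp add: self_adjoint_def)
  also have "T (S y) = S (T y)"
    using assms(3) by (metis blinfun_apply_blinfun_compose)
  finally show "inner ((S o\<^sub>L T) x) y = inner x ((S o\<^sub>L T) y)" by simp
qed

lemma self_adjoint_poly_op: "self_adjoint T \<Longrightarrow> self_adjoint (poly_op p T)"
  by (induction p) (simp_all add: self_adjoint_def[of 0] poly_op_pCons self_adjoint_add
      self_adjoint_scaleR self_adjoint_id self_adjoint_compose_commuting poly_op_commute)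

lemma op_pos_sandwich: "self_adjoint S \<Longrightarrow> op_pos L \<Longrightarrow> op_pos (S o\<^sub>L L o\<^sub>L S)"
  by (simp add: op_pos_def self_adjoint_def)

lemma op_pos_square: "self_adjoint S \<Longrightarrow> op_pos (S o\<^sub>L S)"
  using op_pos_sandwich[of S id_blinfun] by (simp add: op_pos_def)

lemma op_le_sandwich:
  assumes "self_adjoint R" "op_le X Y"
  shows "op_le (R o\<^sub>L X o\<^sub>L R) (R o\<^sub>L Y o\<^sub>L R)"
proof -
  have "(R o\<^sub>L Y o\<^sub>L R) - (R o\<^sub>L X o\<^sub>L R) = R o\<^sub>L (Y - X) o\<^sub>L R"
    by (rule blinfun_eqI) (simp add: blinfun.diff_left blinfun.diff_right)
  then show ?thesis
    using op_pos_sandwich[OF assms(1)] assms(2) by (simp add: op_le_iff_op_pos)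
qed

lemma op_le_sum:
  assumes "\<And>j. j \<in> S \<Longrightarrow> op_le (X j) (Y j)"
  shows "op_le (\<Sum>j\<in>S. X j) (\<Sum>j\<in>S. Y j)"
  unfolding op_le_def
proof
  fix x
  have "inner (((\<Sum>j\<in>S. Y j) - (\<Sum>j\<in>S. X j)) x) x = (\<Sum>j\<in>S. inner ((Y j - X j) x) x)"
    by (simp add: blinfun.diff_left blinfun.sum_left inner_sum_left inner_diff_left sum_subtractf)
  also have "\<dots> \<ge> 0"
    using assms by (intro sum_nonneg) (simp add: op_le_def)
  finally show "0 \<le> inner (((\<Sum>j\<in>S. Y j) - (\<Sum>j\<in>S. X j)) x) x" .
qed

lemma inner_apply_le_norm:
  fixes T :: "'a::real_inner \<Rightarrow>\<^sub>L 'a"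
  shows "inner (T x) x \<le> norm T * (norm x)\<^sup>2"
proof -
  have "inner (T x) x \<le> norm (T x) * norm x" by (rule real_inner_class.Cauchy_Schwarz_ineq2[THEN abs_le_D1])
  also have "\<dots> \<le> norm T * norm x * norm x" by (simp add: mult_right_mono norm_blinfun)
  finally show ?thesis by (simp add: power2_eq_square mult.assoc)
qed

lemma op_pos_norm_apply_le:
  assumes "self_adjoint U" "op_pos U" "0 < d" "\<And>y. inner (U y) y \<le> d * (norm y)\<^sup>2"
  shows "(norm (U x))\<^sup>2 \<le> d * inner (U x) x"
proof -
  have sym: "inner (U (U x)) x = inner (U x) (U x)"
    using assms(1) by (simp add: self_adjoint_def)
  let ?v = "x - (1 / d) *\<^sub>R U x"
  have "0 \<le> inner (U ?v) ?v" using assms(2) by (simp add: op_pos_def)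
  also have "\<dots> = inner (U x) x - (2 / d) * inner (U x) (U x) + (1 / d)\<^sup>2 * inner (U (U x)) (U x)"
    by (simp add: blinfun.diff_right blinfun.scaleR_right sym
        power2_eq_square algebra_simps)
  also have "\<dots> \<le> inner (U x) x - (2 / d) * inner (U x) (U x) + (1 / d)\<^sup>2 * (d * inner (U x) (U x))"
    using assms(4)[of "U x"] by (intro add_left_mono mult_left_mono) (simp_all add: power2_norm_eq_inner)
  also have "\<dots> = inner (U x) x - inner (U x) (U x) / d"
    using assms(3) by (simp add: field_simps power2_eq_square)
  finally show ?thesis using assms(3) by (simp add: field_simps power2_norm_eq_inner)
qed

lemma op_pos_compose_complement:
  assumes "self_adjoint U" "op_pos U" "0 < d" "\<And>y. inner (U y) y \<le> d * (norm y)\<^sup>2"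
  shows "op_pos (U o\<^sub>L (d *\<^sub>R id_blinfun - U))"
  unfolding op_pos_def
proof
  fix x
  have "inner ((U o\<^sub>L (d *\<^sub>R id_blinfun - U)) x) x = inner (d *\<^sub>R x - U x) (U x)"
    using assms(1) by (simp add: self_adjoint_def blinfun.diff_left blinfun.scaleR_left)
  also have "\<dots> = d * inner (U x) x - (norm (U x))\<^sup>2"
    by (simp add: inner_diff_left inner_commute[of x] power2_norm_eq_inner)
  finally have "inner ((U o\<^sub>L (d *\<^sub>R id_blinfun - U)) x) x = d * inner (U x) x - (norm (U x))\<^sup>2" .
  then show "0 \<le> inner ((U o\<^sub>L (d *\<^sub>R id_blinfun - U)) x) x"
    using op_pos_norm_apply_le[OF assms] by simp
qed

section \<open>Polynomials nonnegative on an interval\<close>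

inductive Icc_preordering :: "real \<Rightarrow> real \<Rightarrow> real poly \<Rightarrow> bool" for m M :: real where
  square: "Icc_preordering m M (s * s)"
| lower: "Icc_preordering m M ([:-m, 1:] * (s * s))"
| upper: "Icc_preordering m M ([:M, -1:] * (s * s))"
| both: "Icc_preordering m M ([:-m, 1:] * [:M, -1:] * (s * s))"
| add: "Icc_preordering m M p \<Longrightarrow> Icc_preordering m M q \<Longrightarrow> Icc_preordering m M (p + q)"

lemma Icc_preordering_const: "0 \<le> c \<Longrightarrow> Icc_preordering m M [:c:]"
  using Icc_preordering.square[of m M "[:sqrt c:]"] by simp

lemma Icc_preordering_mult_lower: "Icc_preordering m M p \<Longrightarrow> Icc_preordering m M ([:-m, 1:] * p)"
proof (induction rule: Icc_preordering.induct)
  case (square s) then show ?case using Icc_preordering.lower[of m M s] by simp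
next
  case (lower s) then show ?case
    using Icc_preordering.square[of m M "[:-m, 1:] * s"] by (simp only: ac_simps)
next
  case (upper s) then show ?case using Icc_preordering.both[of m M s] by (simp only: ac_simps)
next
  case (both s) then show ?case
    using Icc_preordering.upper[of m M "[:-m, 1:] * s"] by (simp only: ac_simps)
qed (simp add: distrib_left Icc_preordering.add)

lemma Icc_preordering_mult_upper: "Icc_preordering m M p \<Longrightarrow> Icc_preordering m M ([:M, -1:] * p)"
proof (induction rule: Icc_preordering.induct)
  case (square s) then show ?case using Icc_preordering.upper[of m M s] by simp
next
  case (lower s) then show ?case using Icc_preordering.both[of m M s] by (simp only: ac_simps)
next
  case (upper s) then show ?case
    using Icc_preordering.square[of m M "[:M, -1:] * s"] by (simp only: ac_simps)
next
  case (both s) then show ?case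
    using Icc_preordering.lower[of m M "[:M, -1:] * s"] by (simp only: ac_simps)
qed (simp add: distrib_left Icc_preordering.add)

lemma Icc_preordering_mult_square: "Icc_preordering m M p \<Longrightarrow> Icc_preordering m M (r * r * p)"
proof (induction rule: Icc_preordering.induct)
  case (square s) then show ?case
    using Icc_preordering.square[of m M "r * s"] by (simp only: ac_simps)
next
  case (lower s) then show ?case
    using Icc_preordering.lower[of m M "r * s"] by (simp only: ac_simps)
next
  case (upper s) then show ?case
    using Icc_preordering.upper[of m M "r * s"] by (simp only: ac_simps)
next
  case (both s) then show ?case
    using Icc_preordering.both[of m M "r * s"] by (simp only: ac_simps)
qed (simp add: distrib_left Icc_preordering.add)

lemma poly_nonneg_at_punctured_point:
  fixes q :: "real poly"
  assumes "a < b" "r \<in> {a..b}" "\<And>t. t \<in> {a..b} \<Longrightarrow> t \<noteq> r \<Longrightarrow> 0 \<le> poly q t"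
  shows "0 \<le> poly q r"
proof (rule tendsto_lowerbound)
  show "(poly q \<longlongrightarrow> poly q r) (at r within {a..b})"
    using continuous_within_poly by (auto simp: continuous_within)
  show "\<forall>\<^sub>F t in at r within {a..b}. 0 \<le> poly q t"
    using assms(3) by (auto simp: eventually_at_filter)
  show "at r within {a..b} \<noteq> bot"
    using assms(1,2) by (simp add: trivial_limit_within)
qed

lemma nonneg_poly_quotient:
  fixes q g q' :: "real poly"
  assumes "a < b" "r \<in> {a..b}" "q = g * q'"
    and "\<And>t. t \<in> {a..b} \<Longrightarrow> 0 \<le> poly q t" "\<And>t. t \<in> {a..b} \<Longrightarrow> t \<noteq> r \<Longrightarrow> 0 < poly g t"
    and "t \<in> {a..b}"
  shows "0 \<le> poly q' t"
proof -
  have "0 \<le> poly q' s" if "s \<in> {a..b}" "s \<noteq> r" for s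
    using assms(4)[OF that(1)] assms(5)[OF that] by (simp add: assms(3) zero_le_mult_iff)
  then show ?thesis
    using poly_nonneg_at_punctured_point[OF assms(1,2), of q'] assms(6) by (cases "t = r") auto
qed

lemma nonneg_poly_Icc_root_factor:
  fixes q :: "real poly"
  assumes "m < M" "r \<in> {m..M}" "poly q r = 0" "q \<noteq> 0"
    and nonneg: "\<And>t. t \<in> {m..M} \<Longrightarrow> 0 \<le> poly q t"
  obtains q' where "degree q' < degree q" "\<And>t. t \<in> {m..M} \<Longrightarrow> 0 \<le> poly q' t"
    and "q = [:-m, 1:] * q' \<or> q = [:M, -1:] * q' \<or> q = [:-r, 1:] * [:-r, 1:] * q'"
proof -
  have deg: "degree q' < degree q" if "q = g * q'" "0 < degree g" for g q' :: "real poly"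
    using that assms(4) degree_mult_eq[of g q'] by (cases "g = 0 \<or> q' = 0") auto
  obtain q1 where q1: "q = [:-r, 1:] * q1"
    using assms(3) by (metis dvdE poly_eq_0_iff_dvd)
  consider "r = m" | "r = M" | "m < r" "r < M" using assms(2) by fastforce
  then show ?thesis
  proof cases
    case 1
    have "0 \<le> poly q1 t" if "t \<in> {m..M}" for t
      by (rule nonneg_poly_quotient[OF assms(1,2) q1 nonneg _ that]) (use 1 in auto)
    with deg[OF q1] q1 1 show ?thesis by (intro that) auto
  next
    case 2
    then have q1': "q = [:M, -1:] * - q1" by (simp add: q1)
    have "0 \<le> poly (- q1) t" if "t \<in> {m..M}" for t
      by (rule nonneg_poly_quotient[OF assms(1,2) q1' nonneg _ that]) (use 2 in auto)
    then show ?thesis using that[of "- q1"] deg[OF q1'] q1' by simp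
  next
    case 3
    have "0 \<le> poly q1 r"
      by (rule nonneg_poly_quotient[of r M r q "[:-r, 1:]" q1]) (use 3 assms(2) nonneg q1 in auto)
    moreover have "0 \<le> poly (- q1) r"
      by (rule nonneg_poly_quotient[of m r r q "[:r, -1:]" "- q1"]) (use 3 assms(2) nonneg q1 in auto)
    ultimately have "poly q1 r = 0" by simp
    then obtain q2 where "q1 = [:-r, 1:] * q2"
      by (metis dvdE poly_eq_0_iff_dvd)
    then have q2: "q = ([:-r, 1:] * [:-r, 1:]) * q2" by (simp only: q1 ac_simps)
    have "0 < poly ([:-r, 1:] * [:-r, 1:]) t" if "t \<noteq> r" for t
    proof -
      have "poly ([:-r, 1:] * [:-r, 1:]) t = (t - r)\<^sup>2" by (simp add: power2_eq_square algebra_simps)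
      then show ?thesis using that by simp
    qed
    then have "0 \<le> poly q2 t" if "t \<in> {m..M}" for t
      by (intro nonneg_poly_quotient[OF assms(1,2) q2 nonneg _ that])
    with deg[OF q2] q2 show ?thesis by (intro that) (auto simp: degree_mult_eq)
  qed
qed

lemma nonneg_poly_Icc_preordering:
  fixes p :: "real poly"
  assumes "m < M" "\<And>t. t \<in> {m..M} \<Longrightarrow> 0 \<le> poly p t"
  shows "Icc_preordering m M p"
  using assms(2)
proof (induction "degree p" arbitrary: p rule: less_induct)
  case less
  have "\<exists>r\<in>{m..M}. \<forall>t\<in>{m..M}. poly p r \<le> poly p t"
    using assms(1) by (intro continuous_attains_inf continuous_on_poly continuous_on_id) auto
  then obtain r where r: "r \<in> {m..M}" and r_min: "\<And>t. t \<in> {m..M} \<Longrightarrow> poly p r \<le> poly p t"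
    by blast
  define q where "q = p - [:poly p r:]"
  have p_eq: "p = q + [:poly p r:]" by (simp add: q_def)
  have const: "Icc_preordering m M [:poly p r:]"
    using less.prems[OF r] by (rule Icc_preordering_const)
  have q_nonneg: "\<And>t. t \<in> {m..M} \<Longrightarrow> 0 \<le> poly q t"
    using r_min by (simp add: q_def)
  have "Icc_preordering m M q"
  proof (cases "q = 0")
    case True
    then show ?thesis using Icc_preordering.square[of m M 0] by simp
  next
    case False
    have "poly q r = 0" by (simp add: q_def)
    then obtain q' where deg: "degree q' < degree q" and q'_nonneg: "\<And>t. t \<in> {m..M} \<Longrightarrow> 0 \<le> poly q' t"
      and q_eq: "q = [:-m, 1:] * q' \<or> q = [:M, -1:] * q' \<or> q = [:-r, 1:] * [:-r, 1:] * q'"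
      using nonneg_poly_Icc_root_factor[OF assms(1) r _ False q_nonneg] by blast
    have "degree q \<le> degree p" unfolding q_def by (rule degree_diff_le) auto
    with deg have "Icc_preordering m M q'"
      by (intro less.hyps q'_nonneg) auto
    with q_eq show ?thesis
      using Icc_preordering_mult_lower Icc_preordering_mult_upper Icc_preordering_mult_square
      by metis
  qed
  then show ?case
    by (subst p_eq) (rule Icc_preordering.add[OF _ const])
qed

lemma op_pos_poly_op_sandwich:
  assumes "self_adjoint T" "op_pos (poly_op w T)"
  shows "op_pos (poly_op (w * (s * s)) T)"
proof -
  have "w * (s * s) = s * w * s" by (simp add: ac_simps)
  then show ?thesis
    using op_pos_sandwich[OF self_adjoint_poly_op[OF assms(1)] assms(2)] by (simp only: poly_op_mult)
qed

lemma op_pos_poly_op_Icc_generators: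
  assumes "m < M" "self_adjoint T"
    and bounds: "\<And>x. m * (norm x)\<^sup>2 \<le> inner (T x) x \<and> inner (T x) x \<le> M * (norm x)\<^sup>2"
  shows "op_pos (poly_op [:-m, 1:] T)" "op_pos (poly_op [:M, -1:] T)"
    and "op_pos (poly_op ([:-m, 1:] * [:M, -1:]) T)"
proof -
  define U where "U = T - m *\<^sub>R id_blinfun"
  have U_apply: "inner (U x) x = inner (T x) x - m * (norm x)\<^sup>2" for x
    by (simp add: U_def blinfun.diff_left blinfun.scaleR_left inner_diff_left power2_norm_eq_inner)
  have lower: "poly_op [:-m, 1:] T = U"
    by (simp add: U_def poly_op_pCons)
  have upper: "poly_op [:M, -1:] T = (M - m) *\<^sub>R id_blinfun - U"
    by (rule blinfun_eqI) (simp add: U_def poly_op_pCons blinfun.add_left blinfun.diff_left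
        blinfun.scaleR_left blinfun.minus_left blinfun.minus_right algebra_simps)
  have U_pos: "op_pos U"
    using bounds by (simp add: op_pos_def U_apply)
  then show "op_pos (poly_op [:-m, 1:] T)" by (simp add: lower)
  have U_bound: "inner (U y) y \<le> (M - m) * (norm y)\<^sup>2" for y
    using bounds[of y] by (simp add: U_apply algebra_simps)
  have "inner (((M - m) *\<^sub>R id_blinfun - U) x) x = (M - m) * (norm x)\<^sup>2 - inner (U x) x" for x
    by (simp add: blinfun.diff_left blinfun.scaleR_left inner_diff_left power2_norm_eq_inner)
  then show "op_pos (poly_op [:M, -1:] T)"
    using U_bound by (simp add: op_pos_def upper)
  have "self_adjoint U"
    by (simp add: U_def self_adjoint_diff self_adjoint_scaleR self_adjoint_id assms(2))
  then show "op_pos (poly_op ([:-m, 1:] * [:M, -1:]) T)"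
    unfolding poly_op_mult lower upper
    using assms(1) by (intro op_pos_compose_complement U_pos U_bound) simp_all
qed

lemma Icc_preordering_op_pos:
  assumes "Icc_preordering m M p" "m < M" "self_adjoint T"
    and "\<And>x. m * (norm x)\<^sup>2 \<le> inner (T x) x \<and> inner (T x) x \<le> M * (norm x)\<^sup>2"
  shows "op_pos (poly_op p T)"
  using assms(1)
proof induction
  case (square s)
  show ?case
    using op_pos_square[OF self_adjoint_poly_op[OF assms(3)]] by (simp add: poly_op_mult)
next
  case (lower s)
  show ?case
    by (rule op_pos_poly_op_sandwich[OF assms(3) op_pos_poly_op_Icc_generators(1)[OF assms(2-4)]])
next
  case (upper s)
  show ?case
    by (rule op_pos_poly_op_sandwich[OF assms(3) op_pos_poly_op_Icc_generators(2)[OF assms(2-4)]])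
next
  case (both s)
  show ?case
    by (rule op_pos_poly_op_sandwich[OF assms(3) op_pos_poly_op_Icc_generators(3)[OF assms(2-4)]])
next
  case (add p q)
  then show ?case by (simp add: poly_op_add op_pos_add)
qed

section \<open>The numerical range and the norm of a polynomial of an operator\<close>

text \<open>On the zero space \<open>num_lo\<close> and \<open>num_hi\<close> are \<open>Inf\<close> and \<open>Sup\<close> of the empty set, hence the
  hypothesis \<open>\<exists>x. x \<noteq> 0\<close> carried from here on.\<close>

lemma num_range_nonempty_bounded:
  fixes T :: "'a::real_inner \<Rightarrow>\<^sub>L 'a"
  assumes "\<exists>x::'a. x \<noteq> 0"
  shows "{inner (T x) x | x. norm x = 1} \<noteq> {}" and "bdd_below {inner (T x) x | x. norm x = 1}"
    and "bdd_above {inner (T x) x | x. norm x = 1}"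
proof -
  obtain y :: 'a where "y \<noteq> 0" using assms by blast
  then show "{inner (T x) x | x. norm x = 1} \<noteq> {}"
    by (auto intro!: exI[of _ "y /\<^sub>R norm y"])
  have bound: "\<bar>inner (T x) x\<bar> \<le> norm T" if "norm x = 1" for x
    using Cauchy_Schwarz_ineq2[of "T x" x] norm_blinfun[of T x] that by simp
  show "bdd_below {inner (T x) x | x. norm x = 1}"
    by (rule bdd_belowI[of _ "- norm T"]) (use bound in \<open>force simp: abs_le_iff\<close>)
  show "bdd_above {inner (T x) x | x. norm x = 1}"
    by (rule bdd_aboveI[of _ "norm T"]) (use bound in \<open>force simp: abs_le_iff\<close>)
qed

lemma num_range_bounds:
  fixes T :: "'a::real_inner \<Rightarrow>\<^sub>L 'a"
  assumes "\<exists>x::'a. x \<noteq> 0"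
  shows "num_lo T * (norm x)\<^sup>2 \<le> inner (T x) x \<and> inner (T x) x \<le> num_hi T * (norm x)\<^sup>2"
proof (cases "x = 0")
  case False
  define u where "u = x /\<^sub>R norm x"
  have "norm u = 1" using False by (simp add: u_def)
  then have "inner (T u) u \<in> {inner (T x) x | x. norm x = 1}" by blast
  moreover have "inner (T u) u = inner (T x) x / (norm x)\<^sup>2"
    by (simp add: u_def blinfun.scaleR_right power2_eq_square field_simps)
  ultimately have "num_lo T \<le> inner (T x) x / (norm x)\<^sup>2" "inner (T x) x / (norm x)\<^sup>2 \<le> num_hi T"
    unfolding num_lo_def num_hi_def using num_range_nonempty_bounded[OF assms]
    by (auto intro: cInf_lower cSup_upper)
  then show ?thesis using False by (simp add: field_simps)
qed simp

lemma num_lo_le_num_hi: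
  fixes T :: "'a::real_inner \<Rightarrow>\<^sub>L 'a"
  assumes "\<exists>x::'a. x \<noteq> 0"
  shows "num_lo T \<le> num_hi T"
  unfolding num_lo_def num_hi_def using num_range_nonempty_bounded[OF assms] by (meson cInf_le_cSup)

lemma le_num_lo:
  fixes T :: "'a::real_inner \<Rightarrow>\<^sub>L 'a"
  assumes "\<exists>x::'a. x \<noteq> 0" "\<And>x. c * (norm x)\<^sup>2 \<le> inner (T x) x"
  shows "c \<le> num_lo T"
  unfolding num_lo_def
proof (rule cInf_greatest[OF num_range_nonempty_bounded(1)[OF assms(1)]])
  fix v assume "v \<in> {inner (T x) x | x. norm x = 1}"
  then obtain x where "v = inner (T x) x" "norm x = 1" by blast
  then show "c \<le> v" using assms(2)[of x] by simp
qed

lemma self_adjoint_eq_0: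
  assumes "self_adjoint S" "\<And>x. inner (S x) x = 0"
  shows "S = 0"
proof (rule blinfun_eqI)
  fix x
  have "inner (S (x + S x)) (x + S x) = 0" by (rule assms(2))
  then have "inner (S x) (S x) = 0"
    using assms(1) assms(2)[of x] assms(2)[of "S x"]
    by (simp add: self_adjoint_def blinfun.add_right inner_add_left inner_add_right inner_commute)
  then show "S x = blinfun_apply 0 x" by simp
qed

lemma op_pos_poly_op:
  fixes T :: "'a::real_inner \<Rightarrow>\<^sub>L 'a"
  assumes "\<exists>x::'a. x \<noteq> 0" "self_adjoint T"
    and nonneg: "\<And>t. t \<in> {num_lo T..num_hi T} \<Longrightarrow> 0 \<le> poly p t"
  shows "op_pos (poly_op p T)"
proof (cases "num_lo T < num_hi T")
  case True
  show ?thesis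
    by (rule Icc_preordering_op_pos[OF nonneg_poly_Icc_preordering[OF True nonneg] True assms(2)
          num_range_bounds[OF assms(1)]])
next
  case False
  define m where "m = num_lo T"
  have "num_hi T = m" using False num_lo_le_num_hi[OF assms(1), of T] by (simp add: m_def)
  have "T - m *\<^sub>R id_blinfun = 0"
  proof (rule self_adjoint_eq_0)
    show "self_adjoint (T - m *\<^sub>R id_blinfun)"
      by (simp add: self_adjoint_diff self_adjoint_scaleR self_adjoint_id assms(2))
    show "inner ((T - m *\<^sub>R id_blinfun) x) x = 0" for x
      using num_range_bounds[OF assms(1), of T x] \<open>num_hi T = m\<close>
      by (simp add: m_def blinfun.diff_left blinfun.scaleR_left inner_diff_left power2_norm_eq_inner)
  qed
  then have "poly_op p T = poly p m *\<^sub>R id_blinfun"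
    by (simp add: poly_op_scaleR_id)
  moreover have "0 \<le> poly p m"
    using nonneg[of m] \<open>num_hi T = m\<close> by (simp add: m_def)
  ultimately show ?thesis by (simp add: op_pos_def blinfun.scaleR_left)
qed

lemma norm_poly_op_le:
  fixes T :: "'a::real_inner \<Rightarrow>\<^sub>L 'a"
  assumes "\<exists>x::'a. x \<noteq> 0" "self_adjoint T"
    and bound: "\<And>t. t \<in> {num_lo T..num_hi T} \<Longrightarrow> \<bar>poly p t\<bar> \<le> s"
  shows "norm (poly_op p T) \<le> s"
proof -
  let ?P = "poly_op p T"
  have "0 \<le> s"
    using bound[of "num_lo T"] num_lo_le_num_hi[OF assms(1), of T] by simp
  have "op_pos (poly_op ([:s * s:] - p * p) T)"
  proof (rule op_pos_poly_op[OF assms(1,2)])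
    fix t assume "t \<in> {num_lo T..num_hi T}"
    then have "\<bar>poly p t\<bar> * \<bar>poly p t\<bar> \<le> s * s"
      using bound \<open>0 \<le> s\<close> by (intro mult_mono) simp_all
    then show "0 \<le> poly ([:s * s:] - p * p) t" by simp
  qed
  then have "inner (?P (?P x)) x \<le> (s * s) * inner x x" for x
    by (simp add: op_pos_def poly_op_diff poly_op_mult blinfun.diff_left blinfun.scaleR_left
        inner_diff_left)
  moreover have "inner (?P (?P x)) x = (norm (?P x))\<^sup>2" for x
    using self_adjoint_poly_op[OF assms(2)] by (simp add: self_adjoint_def power2_norm_eq_inner)
  ultimately have "(norm (?P x))\<^sup>2 \<le> (s * norm x)\<^sup>2" for x
    by (metis power2_norm_eq_inner power_mult_distrib power2_eq_square)
  then show ?thesis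
    using \<open>0 \<le> s\<close> by (intro norm_blinfun_bound) (auto intro: power2_le_imp_le)
qed

section \<open>The continuous functional calculus\<close>

definition is_fcalc :: "(real \<Rightarrow> real) \<Rightarrow> ('a::real_inner \<Rightarrow>\<^sub>L 'a) \<Rightarrow> ('a \<Rightarrow>\<^sub>L 'a) \<Rightarrow> bool" where
  "is_fcalc f T X \<longleftrightarrow> (\<forall>e>0. \<exists>d>0. \<forall>p.
      (\<forall>t\<in>{num_lo T..num_hi T}. \<bar>poly p t - f t\<bar> < d) \<longrightarrow> norm (poly_op p T - X) < e)"

lemma real_polynomial_function_imp_poly:
  fixes g :: "real \<Rightarrow> real"
  assumes "real_polynomial_function g"
  shows "\<exists>p. g = poly p"
  using assms
proof induction
  case (linear f)
  have "f x = poly [:0, f 1:] x" for x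
    using linear.hyps[THEN bounded_linear.linear, THEN linear_scale, of x 1] by (simp add: mult.commute)
  then show ?case by blast
next
  case (const c)
  show ?case by (intro exI[of _ "[:c:]"]) auto
next
  case (add f g)
  then obtain p q where "f = poly p" "g = poly q" by blast
  then show ?case by (intro exI[of _ "p + q"]) auto
next
  case (mult f g)
  then obtain p q where "f = poly p" "g = poly q" by blast
  then show ?case by (intro exI[of _ "p * q"]) auto
qed

lemma uniform_limit_polys:
  fixes f :: "real \<Rightarrow> real"
  assumes "continuous_on {a..b} f"
  obtains P where "uniform_limit {a..b} (\<lambda>k. poly (P k)) f sequentially"
proof -
  obtain g where g: "uniform_limit {a..b} g f sequentially" "\<And>k. polynomial_function (g k)"
    using Stone_Weierstrass_uniform_limit[OF compact_Icc assms] by blast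
  have "\<forall>k. \<exists>p. g k = poly p"
    using g(2) by (simp add: real_polynomial_function_eq[symmetric] real_polynomial_function_imp_poly)
  then obtain P where "\<And>k. g k = poly (P k)" by metis
  then have "g = (\<lambda>k. poly (P k))" by blast
  with g(1) show ?thesis by (intro that) simp
qed

lemma norm_poly_op_diff_le:
  fixes T :: "'a::real_inner \<Rightarrow>\<^sub>L 'a"
  assumes "\<exists>x::'a. x \<noteq> 0" "self_adjoint T"
    and "\<And>t. t \<in> {num_lo T..num_hi T} \<Longrightarrow> \<bar>poly p t - f t\<bar> \<le> d1"
    and "\<And>t. t \<in> {num_lo T..num_hi T} \<Longrightarrow> \<bar>poly q t - f t\<bar> \<le> d2"
  shows "norm (poly_op p T - poly_op q T) \<le> d1 + d2"
proof -
  have "norm (poly_op (p - q) T) \<le> d1 + d2"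
    using assms(3,4) by (intro norm_poly_op_le[OF assms(1,2)]) force
  then show ?thesis by (simp add: poly_op_diff)
qed

lemma is_fcalc_tendsto:
  assumes "is_fcalc f T X" "uniform_limit {num_lo T..num_hi T} (\<lambda>k. poly (P k)) f sequentially"
  shows "(\<lambda>k. poly_op (P k) T) \<longlonglongrightarrow> X"
proof (rule LIMSEQ_I)
  fix e :: real assume "0 < e"
  then obtain d where "d > 0"
    and d: "\<And>p. \<forall>t\<in>{num_lo T..num_hi T}. \<bar>poly p t - f t\<bar> < d \<Longrightarrow> norm (poly_op p T - X) < e"
    using assms(1) unfolding is_fcalc_def by blast
  obtain N where "\<And>k. k \<ge> N \<Longrightarrow> \<forall>t\<in>{num_lo T..num_hi T}. dist (poly (P k) t) (f t) < d"
    using uniform_limitD[OF assms(2) \<open>d > 0\<close>] by (auto simp: eventually_sequentially)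
  then show "\<exists>N. \<forall>k\<ge>N. norm (poly_op (P k) T - X) < e"
    using d by (simp add: dist_real_def) blast
qed

lemma is_fcalc_unique:
  assumes "continuous_on {num_lo T..num_hi T} f" "is_fcalc f T X" "is_fcalc f T Y"
  shows "X = Y"
proof -
  obtain P where "uniform_limit {num_lo T..num_hi T} (\<lambda>k. poly (P k)) f sequentially"
    using uniform_limit_polys[OF assms(1)] by blast
  then show ?thesis
    using is_fcalc_tendsto assms(2,3) LIMSEQ_unique by blast
qed

text \<open>The library instance \<open>blinfun :: (real_normed_vector, banach) banach\<close> does not apply to the
  operators considered here: the sort \<open>{real_inner, complete_space}\<close> is not below the class \<open>banach\<close>.\<close>

lemma Cauchy_blinfun_pointwise_limit:
  fixes X :: "nat \<Rightarrow> 'a::real_normed_vector \<Rightarrow>\<^sub>L 'b::{real_normed_vector,complete_space}"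
  assumes "Cauchy X"
  obtains V :: "'a \<Rightarrow>\<^sub>L 'b" where "\<And>x. (\<lambda>k. X k x) \<longlonglongrightarrow> V x"
proof -
  have "Cauchy (\<lambda>k. X k x)" for x
    using bounded_linear.Cauchy[OF blinfun.bounded_linear_left assms] .
  then obtain v where v: "\<And>x. (\<lambda>k. X k x) \<longlonglongrightarrow> v x"
    unfolding Cauchy_convergent_iff convergent_def by metis
  obtain K where K: "\<And>k. norm (X k) \<le> K"
    using Cauchy_Bseq[OF assms] by (meson BseqE)
  have "bounded_linear v"
  proof (rule bounded_linear_intro)
    show "v (x + y) = v x + v y" for x y
      using LIMSEQ_unique[OF v[of "x + y"]] tendsto_add[OF v[of x] v[of y]]
      by (simp add: blinfun.add_right)
    show "v (r *\<^sub>R x) = r *\<^sub>R v x" for r x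
      using LIMSEQ_unique[OF v[of "r *\<^sub>R x"]] tendsto_scaleR[OF tendsto_const v[of x]]
      by (simp add: blinfun.scaleR_right)
    show "norm (v x) \<le> norm x * K" for x
    proof (rule tendsto_upperbound[OF tendsto_norm[OF v]])
      have "norm (X k x) \<le> norm x * K" for k
        using norm_blinfun[of "X k" x] mult_right_mono[OF K[of k] norm_ge_zero[of x]]
        by (simp add: mult.commute)
      then show "\<forall>\<^sub>F k in sequentially. norm (X k x) \<le> norm x * K" by simp
    qed simp
  qed
  with v show ?thesis
    by (intro that[of "Blinfun v"]) (simp add: bounded_linear_Blinfun_apply)
qed

lemma Cauchy_blinfun_convergent:
  fixes X :: "nat \<Rightarrow> 'a::real_normed_vector \<Rightarrow>\<^sub>L 'b::{real_normed_vector,complete_space}"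
  assumes "Cauchy X"
  shows "convergent X"
proof -
  obtain V :: "'a \<Rightarrow>\<^sub>L 'b" where V: "\<And>x. (\<lambda>k. X k x) \<longlonglongrightarrow> V x"
    using Cauchy_blinfun_pointwise_limit[OF assms] by blast
  have "X \<longlonglongrightarrow> V"
  proof (rule LIMSEQ_I)
    fix e :: real assume "0 < e"
    then obtain N where N: "\<And>m n. m \<ge> N \<Longrightarrow> n \<ge> N \<Longrightarrow> norm (X m - X n) < e / 2"
      using CauchyD[OF assms, of "e / 2"] by auto
    have "norm (X n - V) \<le> e / 2" if "n \<ge> N" for n
    proof (rule norm_blinfun_bound)
      fix x
      have "\<forall>\<^sub>F m in sequentially. norm (X n x - X m x) \<le> e / 2 * norm x"
        using eventually_ge_at_top[of N]
      proof eventually_elim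
        case (elim m)
        have "norm (X n x - X m x) \<le> norm (X n - X m) * norm x"
          using norm_blinfun[of "X n - X m" x] by (simp add: blinfun.diff_left)
        also have "\<dots> \<le> e / 2 * norm x"
          using N[OF that elim] by (intro mult_right_mono) simp_all
        finally show ?case .
      qed
      then show "norm ((X n - V) x) \<le> e / 2 * norm x"
        unfolding blinfun.diff_left
        by (intro tendsto_upperbound[OF tendsto_norm[OF tendsto_diff[OF tendsto_const V]]]) simp_all
    qed (use \<open>0 < e\<close> in simp)
    moreover have "e / 2 < e" using \<open>0 < e\<close> by simp
    ultimately have "\<forall>n\<ge>N. norm (X n - V) < e" by (meson order_le_less_trans)
    then show "\<exists>N. \<forall>n\<ge>N. norm (X n - V) < e" ..
  qed
  then show ?thesis by (rule convergentI)
qed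

lemma Cauchy_poly_op:
  fixes T :: "'a::real_inner \<Rightarrow>\<^sub>L 'a"
  assumes "\<exists>x::'a. x \<noteq> 0" "self_adjoint T"
    and P: "uniform_limit {num_lo T..num_hi T} (\<lambda>k. poly (P k)) f sequentially"
  shows "Cauchy (\<lambda>k. poly_op (P k) T)"
proof (rule CauchyI)
  fix e :: real assume "0 < e"
  then obtain N where "\<And>k. k \<ge> N \<Longrightarrow> \<forall>t\<in>{num_lo T..num_hi T}. dist (poly (P k) t) (f t) < e / 3"
    using uniform_limitD[OF P, of "e / 3"] by (auto simp: eventually_sequentially)
  then have "norm (poly_op (P j) T - poly_op (P k) T) \<le> e / 3 + e / 3" if "j \<ge> N" "k \<ge> N" for j k
    using that by (intro norm_poly_op_diff_le[OF assms(1,2), where f = f])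
      (metis dist_real_def less_imp_le)+
  then have "norm (poly_op (P j) T - poly_op (P k) T) < e" if "j \<ge> N" "k \<ge> N" for j k
    using that \<open>0 < e\<close> by fastforce
  then show "\<exists>N. \<forall>j\<ge>N. \<forall>k\<ge>N. norm (poly_op (P j) T - poly_op (P k) T) < e"
    by blast
qed

lemma is_fcalc_exists:
  fixes T :: "'a::{real_inner,complete_space} \<Rightarrow>\<^sub>L 'a"
  assumes nontrivial: "\<exists>x::'a. x \<noteq> 0" and "self_adjoint T"
    and cont: "continuous_on {num_lo T..num_hi T} f"
  shows "\<exists>X. is_fcalc f T X"
proof -
  let ?I = "{num_lo T..num_hi T}"
  obtain P where P: "uniform_limit ?I (\<lambda>k. poly (P k)) f sequentially"
    using uniform_limit_polys[OF cont] by blast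
  obtain X where X: "(\<lambda>k. poly_op (P k) T) \<longlonglongrightarrow> X"
    using Cauchy_blinfun_convergent[OF Cauchy_poly_op[OF assms(1,2) P]] by (auto simp: convergent_def)
  have "norm (poly_op p T - X) < e" if "0 < e" and p: "\<forall>t\<in>?I. \<bar>poly p t - f t\<bar> < e / 2" for e p
  proof -
    have "\<forall>\<^sub>F k in sequentially. \<forall>t\<in>?I. dist (poly (P k) t) (f t) < e / 4"
      by (rule uniform_limitD[OF P]) (use \<open>0 < e\<close> in simp)
    then have "\<forall>\<^sub>F k in sequentially. norm (poly_op p T - poly_op (P k) T) \<le> e / 2 + e / 4"
    proof eventually_elim
      case (elim k)
      show ?case
        using p elim by (intro norm_poly_op_diff_le[OF nontrivial assms(2), where f = f])
          (auto simp: dist_real_def less_imp_le)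
    qed
    then have "norm (poly_op p T - X) \<le> e / 2 + e / 4"
      by (intro tendsto_upperbound[OF tendsto_norm[OF tendsto_diff[OF tendsto_const X]]]) simp_all
    then show ?thesis using \<open>0 < e\<close> by simp
  qed
  then have "is_fcalc f T X"
    unfolding is_fcalc_def by (metis half_gt_zero)
  then show ?thesis ..
qed

lemma fcalc_tendsto:
  fixes T :: "'a::{real_inner,complete_space} \<Rightarrow>\<^sub>L 'a"
  assumes "\<exists>x::'a. x \<noteq> 0" "self_adjoint T" "continuous_on {num_lo T..num_hi T} f"
    and "uniform_limit {num_lo T..num_hi T} (\<lambda>k. poly (P k)) f sequentially"
  shows "(\<lambda>k. poly_op (P k) T) \<longlonglongrightarrow> fcalc f T"
proof -
  obtain X where X: "is_fcalc f T X" using is_fcalc_exists[OF assms(1-3)] ..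
  have "fcalc f T = X"
    unfolding fcalc_def is_fcalc_def[symmetric]
    using X is_fcalc_unique[OF assms(3) X] by blast
  then show ?thesis using is_fcalc_tendsto[OF X assms(4)] by simp
qed

lemma fcalc_poly:
  fixes T :: "'a::{real_inner,complete_space} \<Rightarrow>\<^sub>L 'a"
  assumes "\<exists>x::'a. x \<noteq> 0" "self_adjoint T"
  shows "fcalc (poly p) T = poly_op p T"
  using fcalc_tendsto[OF assms continuous_on_poly[OF continuous_on_id] uniform_limit_const]
  by (simp add: LIMSEQ_const_iff)

lemma fcalc_cong:
  assumes "\<And>t. t \<in> {num_lo T..num_hi T} \<Longrightarrow> f t = g t"
  shows "fcalc f T = fcalc g T"
  unfolding fcalc_def using assms by (metis (no_types, lifting))

lemma fcalc_diff:
  fixes T :: "'a::{real_inner,complete_space} \<Rightarrow>\<^sub>L 'a"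
  assumes "\<exists>x::'a. x \<noteq> 0" "self_adjoint T"
    and f: "continuous_on {num_lo T..num_hi T} f" and g: "continuous_on {num_lo T..num_hi T} g"
  shows "fcalc (\<lambda>t. f t - g t) T = fcalc f T - fcalc g T"
proof -
  obtain P Q where P: "uniform_limit {num_lo T..num_hi T} (\<lambda>k. poly (P k)) f sequentially"
    and Q: "uniform_limit {num_lo T..num_hi T} (\<lambda>k. poly (Q k)) g sequentially"
    using uniform_limit_polys[OF f] uniform_limit_polys[OF g] by metis
  have "(\<lambda>k. poly (P k - Q k)) = (\<lambda>k t. poly (P k) t - poly (Q k) t)"
    by (simp add: fun_eq_iff)
  then have "uniform_limit {num_lo T..num_hi T} (\<lambda>k. poly (P k - Q k)) (\<lambda>t. f t - g t) sequentially"
    using uniform_limit_minus[OF P Q] by simp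
  from fcalc_tendsto[OF assms(1,2) continuous_on_diff[OF f g] this]
  have "(\<lambda>k. poly_op (P k) T - poly_op (Q k) T) \<longlonglongrightarrow> fcalc (\<lambda>t. f t - g t) T"
    by (simp add: poly_op_diff)
  moreover have "(\<lambda>k. poly_op (P k) T - poly_op (Q k) T) \<longlonglongrightarrow> fcalc f T - fcalc g T"
    by (intro tendsto_diff fcalc_tendsto assms P Q)
  ultimately show ?thesis by (rule LIMSEQ_unique)
qed

lemma fcalc_scale:
  fixes T :: "'a::{real_inner,complete_space} \<Rightarrow>\<^sub>L 'a"
  assumes "\<exists>x::'a. x \<noteq> 0" "self_adjoint T" and f: "continuous_on {num_lo T..num_hi T} f"
  shows "fcalc (\<lambda>t. c * f t) T = c *\<^sub>R fcalc f T"
proof -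
  obtain P where P: "uniform_limit {num_lo T..num_hi T} (\<lambda>k. poly (P k)) f sequentially"
    using uniform_limit_polys[OF f] by metis
  have "(\<lambda>k. poly (smult c (P k))) = (\<lambda>k t. c * poly (P k) t)"
    by (simp add: fun_eq_iff)
  then have "uniform_limit {num_lo T..num_hi T} (\<lambda>k. poly (smult c (P k))) (\<lambda>t. c * f t) sequentially"
    using bounded_linear.uniform_limit[OF bounded_linear_mult_right P] by simp
  from fcalc_tendsto[OF assms(1,2) continuous_on_mult[OF continuous_on_const f] this]
  have "(\<lambda>k. c *\<^sub>R poly_op (P k) T) \<longlonglongrightarrow> fcalc (\<lambda>t. c * f t) T"
    by (simp add: poly_op_smult)
  moreover have "(\<lambda>k. c *\<^sub>R poly_op (P k) T) \<longlonglongrightarrow> c *\<^sub>R fcalc f T"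
    by (intro tendsto_scaleR tendsto_const fcalc_tendsto assms P)
  ultimately show ?thesis by (rule LIMSEQ_unique)
qed

lemma fcalc_mult:
  fixes T :: "'a::{real_inner,complete_space} \<Rightarrow>\<^sub>L 'a"
  assumes "\<exists>x::'a. x \<noteq> 0" "self_adjoint T"
    and f: "continuous_on {num_lo T..num_hi T} f" and g: "continuous_on {num_lo T..num_hi T} g"
  shows "fcalc (\<lambda>t. f t * g t) T = fcalc f T o\<^sub>L fcalc g T"
proof -
  obtain P Q where P: "uniform_limit {num_lo T..num_hi T} (\<lambda>k. poly (P k)) f sequentially"
    and Q: "uniform_limit {num_lo T..num_hi T} (\<lambda>k. poly (Q k)) g sequentially"
    using uniform_limit_polys[OF f] uniform_limit_polys[OF g] by metis
  have "bounded (f ` {num_lo T..num_hi T})" "bounded (g ` {num_lo T..num_hi T})"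
    using f g by (simp_all add: compact_imp_bounded compact_continuous_image)
  moreover have "(\<lambda>k. poly (P k * Q k)) = (\<lambda>k t. poly (P k) t * poly (Q k) t)"
    by (simp add: fun_eq_iff)
  ultimately have "uniform_limit {num_lo T..num_hi T} (\<lambda>k. poly (P k * Q k)) (\<lambda>t. f t * g t) sequentially"
    using uniform_lim_mult[OF P Q] by simp
  from fcalc_tendsto[OF assms(1,2) continuous_on_mult[OF f g] this]
  have "(\<lambda>k. poly_op (P k) T o\<^sub>L poly_op (Q k) T) \<longlonglongrightarrow> fcalc (\<lambda>t. f t * g t) T"
    by (simp add: poly_op_mult)
  moreover have "(\<lambda>k. poly_op (P k) T o\<^sub>L poly_op (Q k) T) \<longlonglongrightarrow> (fcalc f T o\<^sub>L fcalc g T)"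
    by (intro bounded_bilinear.tendsto[OF bounded_bilinear_blinfun_compose] fcalc_tendsto assms P Q)
  ultimately show ?thesis by (rule LIMSEQ_unique)
qed

lemma fcalc_self_adjoint:
  fixes T :: "'a::{real_inner,complete_space} \<Rightarrow>\<^sub>L 'a"
  assumes "\<exists>x::'a. x \<noteq> 0" "self_adjoint T" and f: "continuous_on {num_lo T..num_hi T} f"
  shows "self_adjoint (fcalc f T)"
  unfolding self_adjoint_def
proof (intro allI)
  fix x y
  obtain P where P: "uniform_limit {num_lo T..num_hi T} (\<lambda>k. poly (P k)) f sequentially"
    using uniform_limit_polys[OF f] by metis
  note lim = fcalc_tendsto[OF assms P]
  have "(\<lambda>k. inner (poly_op (P k) T x) y) \<longlonglongrightarrow> inner (fcalc f T x) y"
    "(\<lambda>k. inner x (poly_op (P k) T y)) \<longlonglongrightarrow> inner x (fcalc f T y)"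
    by (intro tendsto_inner blinfun.tendsto[OF lim] tendsto_const)+
  moreover have "inner (poly_op (P k) T x) y = inner x (poly_op (P k) T y)" for k
    using self_adjoint_poly_op[OF assms(2)] by (simp add: self_adjoint_def)
  ultimately show "inner (fcalc f T x) y = inner x (fcalc f T y)"
    using LIMSEQ_unique by fastforce
qed

text \<open>Positivity comes for free from multiplicativity: a nonnegative \<open>f\<close> is \<open>(sqrt \<circ> f)\<^sup>2\<close>.\<close>

lemma fcalc_op_pos:
  fixes T :: "'a::{real_inner,complete_space} \<Rightarrow>\<^sub>L 'a"
  assumes "\<exists>x::'a. x \<noteq> 0" "self_adjoint T" and f: "continuous_on {num_lo T..num_hi T} f"
    and nonneg: "\<And>t. t \<in> {num_lo T..num_hi T} \<Longrightarrow> 0 \<le> f t"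
  shows "op_pos (fcalc f T)"
proof -
  have sqrt_f: "continuous_on {num_lo T..num_hi T} (\<lambda>t. sqrt (f t))"
    using f by (rule continuous_on_real_sqrt)
  have "fcalc f T = fcalc (\<lambda>t. sqrt (f t) * sqrt (f t)) T"
    using nonneg by (intro fcalc_cong) simp
  also have "\<dots> = fcalc (\<lambda>t. sqrt (f t)) T o\<^sub>L fcalc (\<lambda>t. sqrt (f t)) T"
    by (rule fcalc_mult[OF assms(1,2) sqrt_f sqrt_f])
  finally show ?thesis
    using op_pos_square[OF fcalc_self_adjoint[OF assms(1,2) sqrt_f]] by simp
qed

section \<open>Strictly positive operators and operator perspectives\<close>

lemma strictly_pos_coercive:
  fixes A :: "'a::real_inner \<Rightarrow>\<^sub>L 'a"
  assumes "strictly_pos A"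
  obtains c where "0 < c" "\<And>x. c * (norm x)\<^sup>2 \<le> inner (A x) x"
proof -
  have sa: "self_adjoint A" and pos: "op_pos A"
    using assms by (auto simp: strictly_pos_def op_pos_def)
  obtain S where S: "S o\<^sub>L A = id_blinfun"
    using assms by (auto simp: strictly_pos_def op_invertible_def)
  define d where "d = norm A + 1"
  define K where "K = (norm S)\<^sup>2 * d"
  have "0 < d" "0 \<le> K" by (simp_all add: d_def K_def add_nonneg_pos)
  have "(norm x)\<^sup>2 \<le> K * inner (A x) x" for x
  proof -
    have "inner (A y) y \<le> d * (norm y)\<^sup>2" for y
      using inner_apply_le_norm[of A y] by (simp add: d_def distrib_right add_increasing2)
    then have Ax: "(norm (A x))\<^sup>2 \<le> d * inner (A x) x"
      by (rule op_pos_norm_apply_le[OF sa pos \<open>0 < d\<close>])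
    have "norm x = norm (S (A x))"
      using S by (metis blinfun_apply_blinfun_compose blinfun_apply_id_blinfun)
    also have "\<dots> \<le> norm S * norm (A x)" by (rule norm_blinfun)
    finally have "(norm x)\<^sup>2 \<le> (norm S)\<^sup>2 * (norm (A x))\<^sup>2"
      by (metis power_mono norm_ge_zero power_mult_distrib)
    also have "\<dots> \<le> (norm S)\<^sup>2 * (d * inner (A x) x)"
      using Ax by (rule mult_left_mono) simp
    finally show ?thesis by (simp add: K_def mult.assoc)
  qed
  then have "(norm x)\<^sup>2 \<le> (K + 1) * inner (A x) x" for x
    using pos by (simp add: op_pos_def distrib_right add_increasing2)
  then have "1 / (K + 1) * (norm x)\<^sup>2 \<le> inner (A x) x" for x
    using \<open>0 \<le> K\<close> by (simp add: field_simps)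
  with \<open>0 \<le> K\<close> show ?thesis by (intro that[of "1 / (K + 1)"]) auto
qed

lemma strictly_pos_num_lo_pos:
  fixes A :: "'a::real_inner \<Rightarrow>\<^sub>L 'a"
  assumes "\<exists>x::'a. x \<noteq> 0" "strictly_pos A"
  shows "0 < num_lo A"
proof -
  obtain c where "0 < c" "\<And>x. c * (norm x)\<^sup>2 \<le> inner (A x) x"
    using strictly_pos_coercive[OF assms(2)] by blast
  then show ?thesis using le_num_lo[OF assms(1)] by fastforce
qed

lemma continuous_on_Icc_num_lo_pos:
  assumes "continuous_on {0<..} f" "0 < num_lo T"
  shows "continuous_on {num_lo T..num_hi T} f"
  by (rule continuous_on_subset[OF assms(1)]) (use assms(2) in auto)

lemma continuous_on_powr_pos: "continuous_on {0<..} (\<lambda>t::real. t powr \<nu>)"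
  by (intro continuous_intros) auto

lemma op_rpow_add:
  fixes A :: "'a::{real_inner,complete_space} \<Rightarrow>\<^sub>L 'a"
  assumes "\<exists>x::'a. x \<noteq> 0" "strictly_pos A"
  shows "op_rpow A \<nu> o\<^sub>L op_rpow A \<rho> = op_rpow A (\<nu> + \<rho>)"
proof -
  have sa: "self_adjoint A" using assms(2) by (simp add: strictly_pos_def)
  note pos = strictly_pos_num_lo_pos[OF assms]
  have cont: "continuous_on {num_lo A..num_hi A} (\<lambda>t. t powr s)" for s
    by (rule continuous_on_Icc_num_lo_pos[OF continuous_on_powr_pos pos])
  have "op_rpow A \<nu> o\<^sub>L op_rpow A \<rho> = fcalc (\<lambda>t. t powr \<nu> * t powr \<rho>) A"
    unfolding op_rpow_def by (rule fcalc_mult[symmetric, OF assms(1) sa cont cont])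
  also have "\<dots> = op_rpow A (\<nu> + \<rho>)"
    unfolding op_rpow_def using pos by (intro fcalc_cong) (simp add: powr_add)
  finally show ?thesis .
qed

lemma op_rpow_0:
  fixes A :: "'a::{real_inner,complete_space} \<Rightarrow>\<^sub>L 'a"
  assumes "\<exists>x::'a. x \<noteq> 0" "strictly_pos A"
  shows "op_rpow A 0 = id_blinfun"
proof -
  have "op_rpow A 0 = fcalc (poly [:1:]) A"
    unfolding op_rpow_def using strictly_pos_num_lo_pos[OF assms] by (intro fcalc_cong) simp
  also have "\<dots> = id_blinfun"
    using assms(2) by (simp add: fcalc_poly[OF assms(1)] strictly_pos_def)
  finally show ?thesis .
qed

lemma op_invertible_op_rpow:
  fixes A :: "'a::{real_inner,complete_space} \<Rightarrow>\<^sub>L 'a"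
  assumes "\<exists>x::'a. x \<noteq> 0" "strictly_pos A"
  shows "op_invertible (op_rpow A \<nu>)"
  unfolding op_invertible_def
  using op_rpow_add[OF assms, of "- \<nu>" \<nu>] op_rpow_add[OF assms, of \<nu> "- \<nu>"] op_rpow_0[OF assms]
  by auto

lemma self_adjoint_op_rpow:
  fixes A :: "'a::{real_inner,complete_space} \<Rightarrow>\<^sub>L 'a"
  assumes "\<exists>x::'a. x \<noteq> 0" "strictly_pos A"
  shows "self_adjoint (op_rpow A \<nu>)"
  unfolding op_rpow_def using assms(2)
  by (intro fcalc_self_adjoint[OF assms(1)] continuous_on_Icc_num_lo_pos[OF continuous_on_powr_pos
        strictly_pos_num_lo_pos[OF assms]]) (simp add: strictly_pos_def)

lemma strictly_pos_sandwich:
  fixes R B :: "'a::real_inner \<Rightarrow>\<^sub>L 'a"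
  assumes "self_adjoint R" "op_invertible R" "strictly_pos B"
  shows "strictly_pos (R o\<^sub>L B o\<^sub>L R)"
proof -
  obtain R' :: "'a \<Rightarrow>\<^sub>L 'a" where R': "\<And>x. R' (R x) = x" "\<And>x. R (R' x) = x"
    using assms(2) unfolding op_invertible_def by (metis blinfun_apply_blinfun_compose blinfun_apply_id_blinfun)
  obtain B' :: "'a \<Rightarrow>\<^sub>L 'a" where B': "\<And>x. B' (B x) = x" "\<And>x. B (B' x) = x"
    using assms(3) unfolding strictly_pos_def op_invertible_def
    by (metis blinfun_apply_blinfun_compose blinfun_apply_id_blinfun)
  have "(R' o\<^sub>L B' o\<^sub>L R') o\<^sub>L (R o\<^sub>L B o\<^sub>L R) = id_blinfun"
    "(R o\<^sub>L B o\<^sub>L R) o\<^sub>L (R' o\<^sub>L B' o\<^sub>L R') = id_blinfun"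
    by (auto intro!: blinfun_eqI simp: R' B')
  then have "op_invertible (R o\<^sub>L B o\<^sub>L R)"
    unfolding op_invertible_def by blast
  moreover have "self_adjoint (R o\<^sub>L B o\<^sub>L R)"
    using assms(1,3) by (simp add: self_adjoint_def strictly_pos_def)
  moreover have "op_pos (R o\<^sub>L B o\<^sub>L R)"
    using assms(3) by (intro op_pos_sandwich[OF assms(1)]) (simp add: strictly_pos_def op_pos_def)
  ultimately show ?thesis by (simp add: strictly_pos_def op_pos_def)
qed

definition op_perspective :: "(real \<Rightarrow> real) \<Rightarrow> ('a::real_inner \<Rightarrow>\<^sub>L 'a) \<Rightarrow> ('a \<Rightarrow>\<^sub>L 'a) \<Rightarrow> ('a \<Rightarrow>\<^sub>L 'a)" where
  "op_perspective f A B =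
     op_rpow A (1/2) o\<^sub>L fcalc f (op_rpow A (-1/2) o\<^sub>L B o\<^sub>L op_rpow A (-1/2)) o\<^sub>L op_rpow A (1/2)"

lemma strictly_pos_congruence:
  fixes A B :: "'a::{real_inner,complete_space} \<Rightarrow>\<^sub>L 'a"
  assumes "\<exists>x::'a. x \<noteq> 0" "strictly_pos A" "strictly_pos B"
  shows "strictly_pos (op_rpow A (-1/2) o\<^sub>L B o\<^sub>L op_rpow A (-1/2))"
  by (rule strictly_pos_sandwich[OF self_adjoint_op_rpow[OF assms(1,2)] op_invertible_op_rpow[OF assms(1,2)] assms(3)])

lemma op_perspective_mono:
  fixes A B :: "'a::{real_inner,complete_space} \<Rightarrow>\<^sub>L 'a"
  assumes "\<exists>x::'a. x \<noteq> 0" "strictly_pos A" "strictly_pos B"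
    and f: "continuous_on {0<..} f" and g: "continuous_on {0<..} g"
    and le: "\<And>t. 0 < t \<Longrightarrow> f t \<le> g t"
  shows "op_le (op_perspective f A B) (op_perspective g A B)"
proof -
  define C where "C = op_rpow A (-1/2) o\<^sub>L B o\<^sub>L op_rpow A (-1/2)"
  have C: "strictly_pos C" unfolding C_def by (rule strictly_pos_congruence[OF assms(1-3)])
  then have sa: "self_adjoint C" by (simp add: strictly_pos_def)
  note pos = strictly_pos_num_lo_pos[OF assms(1) C]
  note cont = continuous_on_Icc_num_lo_pos[OF _ pos]
  have "op_pos (fcalc (\<lambda>t. g t - f t) C)"
    using pos le by (intro fcalc_op_pos[OF assms(1) sa] cont continuous_on_diff f g) auto
  then have "op_le (fcalc f C) (fcalc g C)"
    by (simp add: op_le_iff_op_pos fcalc_diff[OF assms(1) sa cont[OF g] cont[OF f]])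
  then show ?thesis
    unfolding op_perspective_def C_def[symmetric]
    by (rule op_le_sandwich[OF self_adjoint_op_rpow[OF assms(1,2)]])
qed

lemma rel_entropy_eq_op_perspective:
  fixes A B :: "'a::{real_inner,complete_space} \<Rightarrow>\<^sub>L 'a"
  assumes "\<exists>x::'a. x \<noteq> 0" "strictly_pos A" "strictly_pos B"
  shows "rel_entropy \<nu> A B = op_perspective (\<lambda>t. t powr \<nu> * ln t) A B"
proof -
  define C where "C = op_rpow A (-1/2) o\<^sub>L B o\<^sub>L op_rpow A (-1/2)"
  have C: "strictly_pos C" unfolding C_def by (rule strictly_pos_congruence[OF assms(1-3)])
  note cont = continuous_on_Icc_num_lo_pos[OF _ strictly_pos_num_lo_pos[OF assms(1) C]]
  have "continuous_on {0<..} (\<lambda>t::real. ln t)" by (intro continuous_intros) auto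
  then have "fcalc (\<lambda>t. t powr \<nu> * ln t) C = op_rpow C \<nu> o\<^sub>L op_log C"
    unfolding op_rpow_def op_log_def using C
    by (intro fcalc_mult[OF assms(1)] cont continuous_on_powr_pos) (simp_all add: strictly_pos_def)
  then show ?thesis
    unfolding rel_entropy_def op_perspective_def Let_def C_def[symmetric]
    by (simp add: blinfun_compose_assoc)
qed

lemma gtsallis_eq_op_perspective:
  fixes A B :: "'a::{real_inner,complete_space} \<Rightarrow>\<^sub>L 'a"
  assumes "\<exists>x::'a. x \<noteq> 0" "strictly_pos A" "strictly_pos B"
    and x: "x = \<mu> + (of_int k - 1) * l" and y: "y = \<mu> + of_int k * l"
  shows "gtsallis \<mu> k l A B = op_perspective (\<lambda>t. (t powr y - t powr x) / (y - x)) A B"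
proof -
  define C where "C = op_rpow A (-1/2) o\<^sub>L B o\<^sub>L op_rpow A (-1/2)"
  define R where "R = op_rpow A (1/2)"
  have C: "strictly_pos C" unfolding C_def by (rule strictly_pos_congruence[OF assms(1-3)])
  then have sa: "self_adjoint C" by (simp add: strictly_pos_def)
  note cont = continuous_on_Icc_num_lo_pos[OF _ strictly_pos_num_lo_pos[OF assms(1) C]]
  have "y - x = l" by (simp add: x y algebra_simps)
  then have "fcalc (\<lambda>t. (t powr y - t powr x) / (y - x)) C = fcalc (\<lambda>t. (1 / l) * (t powr y - t powr x)) C"
    by simp
  also have "\<dots> = (1 / l) *\<^sub>R fcalc (\<lambda>t. t powr y - t powr x) C"
    by (intro fcalc_scale[OF assms(1) sa] cont continuous_on_diff continuous_on_powr_pos)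
  also have "fcalc (\<lambda>t. t powr y - t powr x) C = op_rpow C y - op_rpow C x"
    unfolding op_rpow_def by (intro fcalc_diff[OF assms(1) sa] cont continuous_on_powr_pos)
  finally have "R o\<^sub>L fcalc (\<lambda>t. (t powr y - t powr x) / (y - x)) C o\<^sub>L R
      = (1 / l) *\<^sub>R ((R o\<^sub>L op_rpow C y o\<^sub>L R) - (R o\<^sub>L op_rpow C x o\<^sub>L R))"
    by (auto intro!: blinfun_eqI simp: blinfun.diff_left blinfun.scaleR_left blinfun.diff_right
        blinfun.scaleR_right)
  then show ?thesis
    unfolding gtsallis_def wgmean_def op_perspective_def C_def[symmetric] R_def[symmetric] x y
    by simp
qed

text \<open>The map \<open>s \<mapsto> t powr s\<close> is convex with derivative \<open>t powr s * ln t\<close>, so its secant slopes lie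
  between the derivatives at the endpoints.\<close>

lemma powr_secant_slope_bounds:
  fixes t a b :: real
  assumes "0 < t" "a < b"
  shows "t powr a * ln t \<le> (t powr b - t powr a) / (b - a)"
    and "(t powr b - t powr a) / (b - a) \<le> t powr b * ln t"
proof -
  define y where "y = t powr (b - a)"
  have "0 < y" using assms(1) by (simp add: y_def)
  have ln_y: "ln y = (b - a) * ln t" using assms(1) by (simp add: y_def)
  have tb: "t powr b = t powr a * y" using assms(1) by (simp add: y_def flip: powr_add)
  have slope: "(t powr b - t powr a) / (b - a) = t powr a * ((y - 1) / (b - a))"
    by (simp add: tb algebra_simps diff_divide_distrib)
  have "ln y \<le> y - 1" using \<open>0 < y\<close> by (rule ln_le_minus_one)
  then have "ln t \<le> (y - 1) / (b - a)" using assms(2) by (simp add: ln_y field_simps)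
  then show "t powr a * ln t \<le> (t powr b - t powr a) / (b - a)"
    unfolding slope by (rule mult_left_mono) simp
  have "ln (1 / y) \<le> 1 / y - 1" using \<open>0 < y\<close> by (intro ln_le_minus_one) simp
  then have "y - 1 \<le> y * ln y" using \<open>0 < y\<close> by (simp add: ln_div field_simps)
  then have "(y - 1) / (b - a) \<le> y * ln t" using assms(2) by (simp add: ln_y field_simps)
  then have "t powr a * ((y - 1) / (b - a)) \<le> t powr a * (y * ln t)" by (rule mult_left_mono) simp
  then show "(t powr b - t powr a) / (b - a) \<le> t powr b * ln t"
    unfolding slope by (simp add: tb)
qed

lemma powr_divided_difference_bounds:
  fixes t x y :: real
  assumes "0 < t" "x \<noteq> y"
  shows "t powr min x y * ln t \<le> (t powr y - t powr x) / (y - x)"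
    and "(t powr y - t powr x) / (y - x) \<le> t powr max x y * ln t"
proof -
  have swap: "(t powr y - t powr x) / (y - x) = (t powr x - t powr y) / (x - y)"
    by (metis minus_diff_eq minus_divide_divide)
  consider "x < y" | "y < x" using assms(2) by linarith
  then have "t powr min x y * ln t \<le> (t powr y - t powr x) / (y - x)
      \<and> (t powr y - t powr x) / (y - x) \<le> t powr max x y * ln t"
  proof cases
    case 1
    then show ?thesis using powr_secant_slope_bounds[OF assms(1) 1] by simp
  next
    case 2
    then show ?thesis unfolding swap using powr_secant_slope_bounds[OF assms(1) 2] by simp
  qed
  then show "t powr min x y * ln t \<le> (t powr y - t powr x) / (y - x)"
    "(t powr y - t powr x) / (y - x) \<le> t powr max x y * ln t" by simp_all
qed

lemma op_le_trivial_space: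
  assumes "\<not> (\<exists>x::'a. x \<noteq> 0)"
  shows "op_le (X :: 'a::real_inner \<Rightarrow>\<^sub>L 'a) Y"
  unfolding op_le_def
proof
  fix x :: 'a
  have "x = 0" using assms by blast
  then show "0 \<le> inner ((Y - X) x) x" by simp
qed

lemma rel_entropy_le_gtsallis:
  fixes A B :: "'a::{real_inner,complete_space} \<Rightarrow>\<^sub>L 'a"
  assumes "strictly_pos A" "strictly_pos B" "l \<noteq> 0"
    and "\<nu> = min (\<mu> + (of_int k - 1) * l) (\<mu> + of_int k * l)"
  shows "op_le (rel_entropy \<nu> A B) (gtsallis \<mu> k l A B)"
proof (cases "\<exists>x::'a. x \<noteq> 0")
  case True
  define x y where "x = \<mu> + (of_int k - 1) * l" and "y = \<mu> + of_int k * l"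
  have "x \<noteq> y" using assms(3) by (simp add: x_def y_def algebra_simps)
  then show ?thesis
    unfolding rel_entropy_eq_op_perspective[OF True assms(1,2)]
      gtsallis_eq_op_perspective[OF True assms(1,2) x_def y_def]
    using powr_divided_difference_bounds(1)[OF _ \<open>x \<noteq> y\<close>] assms(4)
    by (intro op_perspective_mono[OF True assms(1,2)] continuous_intros) (auto simp: x_def y_def)
qed (simp add: op_le_trivial_space)

lemma gtsallis_le_rel_entropy:
  fixes A B :: "'a::{real_inner,complete_space} \<Rightarrow>\<^sub>L 'a"
  assumes "strictly_pos A" "strictly_pos B" "l \<noteq> 0"
    and "\<nu> = max (\<mu> + (of_int k - 1) * l) (\<mu> + of_int k * l)"
  shows "op_le (gtsallis \<mu> k l A B) (rel_entropy \<nu> A B)"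
proof (cases "\<exists>x::'a. x \<noteq> 0")
  case True
  define x y where "x = \<mu> + (of_int k - 1) * l" and "y = \<mu> + of_int k * l"
  have "x \<noteq> y" using assms(3) by (simp add: x_def y_def algebra_simps)
  then show ?thesis
    unfolding rel_entropy_eq_op_perspective[OF True assms(1,2)]
      gtsallis_eq_op_perspective[OF True assms(1,2) x_def y_def]
    using powr_divided_difference_bounds(2)[OF _ \<open>x \<noteq> y\<close>] assms(4)
    by (intro op_perspective_mono[OF True assms(1,2)] continuous_intros) (auto simp: x_def y_def)
qed (simp add: op_le_trivial_space)

theorem corollary4:
  fixes A B :: "nat \<Rightarrow> ('a::{real_inner, complete_space} \<Rightarrow>\<^sub>L 'a)"
    and n :: nat and \<mu> l :: real
  assumes "\<forall>j\<in>{1..n}. strictly_pos (A j)"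
    and "\<forall>j\<in>{1..n}. strictly_pos (B j)"
    and "(\<Sum>j=1..n. A j) = id_blinfun"
    and "(\<Sum>j=1..n. B j) = id_blinfun"
    and "l > 0"
  shows "op_le (\<Sum>j=1..n. rel_entropy (\<mu> - 2*l) (A j) (B j)) (\<Sum>j=1..n. gtsallis \<mu> 2 (-l) (A j) (B j))
       \<and> op_le (\<Sum>j=1..n. gtsallis \<mu> 2 (-l) (A j) (B j)) (\<Sum>j=1..n. rel_entropy (\<mu> - l) (A j) (B j))
       \<and> op_le (\<Sum>j=1..n. rel_entropy (\<mu> - l) (A j) (B j)) (\<Sum>j=1..n. gtsallis \<mu> 1 (-l) (A j) (B j))
       \<and> op_le (\<Sum>j=1..n. gtsallis \<mu> 1 (-l) (A j) (B j)) (\<Sum>j=1..n. rel_entropy \<mu> (A j) (B j))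
       \<and> op_le (\<Sum>j=1..n. rel_entropy \<mu> (A j) (B j)) (\<Sum>j=1..n. gtsallis \<mu> 1 l (A j) (B j))
       \<and> op_le (\<Sum>j=1..n. gtsallis \<mu> 1 l (A j) (B j)) (\<Sum>j=1..n. rel_entropy (\<mu> + l) (A j) (B j))
       \<and> op_le (\<Sum>j=1..n. rel_entropy (\<mu> + l) (A j) (B j)) (\<Sum>j=1..n. gtsallis \<mu> 2 l (A j) (B j))
       \<and> op_le (\<Sum>j=1..n. gtsallis \<mu> 2 l (A j) (B j)) (\<Sum>j=1..n. rel_entropy (\<mu> + 2*l) (A j) (B j))"
  using assms(1,2,5)
  by (intro conjI op_le_sum rel_entropy_le_gtsallis gtsallis_le_rel_entropy) (auto simp: min_def max_def)

end
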